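(* For every composition $\alpha$, the coproduct of $\mathrm{QSym}$ satisfies $\Delta(S_\alpha)=\sum_{\beta\gamma=\alpha}S_\beta\otimes S_\gamma$, where the sum is over all ways of writing $\alpha$ as a concatenation $\beta\gamma$ of two (possibly empty) compositions.
   Context: A composition $\alpha=(\alpha_1,\dots,\alpha_\ell)$ of $n$ is a finite sequence of positive integers summing to $n$; the concatenation of $\beta$ and $\gamma$ is $\beta\gamma$; the empty composition $()$ has $M_{()}=S_{()}=1$. Set $\mathcal{I}(\alpha)=\{\alpha_1,\alpha_1+\alpha_2,\dots,\alpha_1+\cdots+\alpha_{\ell-1}\}$, and write $\beta\le\alpha$ if $\mathcal{I}(\beta)\subseteq\mathcal{I}(\alpha)$. $M_\alpha=\sum_{i_1<\cdots<i_\ell}x_{i_1}^{\alpha_1}\cdots x_{i_\ell}^{\alpha_\ell}$. $\mathrm{QSym}$ is the Hopf algebra spanned by the $M_\alpha$ with coproduct $\Delta(M_\alpha)=\sum_{\beta\gamma=\alpha}M_\beta\otimes M_\gamma$. Shuffle functions: for $\alpha=(\alpha_1,\dots,\alpha_\ell)$ let $\mathrm{OtE}(\alpha)=\{i:\alpha_i\text{ odd},\ \alpha_{i+1}\text{ even}\}=\{i_1<\cdots<i_k\}$ and $m_o(\alpha)=(\alpha_1+\cdots+\alpha_{i_1},\ \alpha_{i_1+1}+\cdots+\alpha_{i_2},\ \dots,\ \alpha_{i_k+1}+\cdots+\alpha_\ell)$. For $m_o(\alpha)\le\beta\le\alpha$, each part $\beta_i$ is a sum of a block of consecutive parts of $\alpha$;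 with $\mathrm{O}(i),\mathrm{E}(i)$ the numbers of odd and even parts of that block put $c_\alpha^\beta=\prod_i\frac{1}{\mathrm{O}(i)!\mathrm{E}(i)!}$. Then $S_\alpha=\sum_{m_o(\alpha)\le\beta\le\alpha}c_\alpha^\beta M_\beta$. *)

theory Defs
  imports Complex_Main "HOL-Library.Function_Algebras"
begin

text \<open>An element of QSym (over the rationals) is represented by its coefficient
  function with respect to the monomial basis M; an element of
  QSym \<otimes> QSym by its coefficient function with respect to the basis
  M_beta \<otimes> M_gamma.\<close>

definition is_comp :: "nat list \<Rightarrow> bool" where
  "is_comp \<alpha> \<longleftrightarrow> (\<forall>x\<in>set \<alpha>. 0 < x)"

type_synonym qsym = "nat list \<Rightarrow> rat"
type_synonym qsym2 = "nat list \<times> nat list \<Rightarrow> rat"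

definition M :: "nat list \<Rightarrow> qsym" where
  "M \<alpha> = (\<lambda>\<beta>. if \<beta> = \<alpha> then 1 else 0)"

definition tensor :: "qsym \<Rightarrow> qsym \<Rightarrow> qsym2" where
  "tensor f g = (\<lambda>(\<beta>, \<gamma>). f \<beta> * g \<gamma>)"

text \<open>Coproduct: the linear extension of Delta(M_alpha) = sum over beta gamma = alpha of
  M_beta \<otimes> M_gamma; the coefficient of M_beta \<otimes> M_gamma in Delta(f) is the
  coefficient of M_(beta gamma) in f.\<close>
definition Delta :: "qsym \<Rightarrow> qsym2" where
  "Delta f = (\<lambda>(\<beta>, \<gamma>). f (\<beta> @ \<gamma>))"

definition Iset :: "nat list \<Rightarrow> nat set" where
  "Iset \<alpha> = {sum_list (take k \<alpha>) | k. 0 < k \<and> k < length \<alpha>}"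

text \<open>m_o(alpha): merge consecutive parts, cutting exactly after odd-then-even positions.\<close>
fun m_o :: "nat list \<Rightarrow> nat list" where
  "m_o [] = []"
| "m_o [a] = [a]"
| "m_o (a # b # rest) =
     (if odd a \<and> even b then a # m_o (b # rest)
      else (case m_o (b # rest) of [] \<Rightarrow> [a] | h # t \<Rightarrow> (a + h) # t))"

text \<open>Numbers of odd / even parts of alpha in the block of alpha forming part i (0-indexed) of beta.\<close>
definition O_cnt :: "nat list \<Rightarrow> nat list \<Rightarrow> nat \<Rightarrow> nat" where
  "O_cnt \<alpha> \<beta> i = card {j. j < length \<alpha> \<and> odd (\<alpha> ! j) \<and>
      sum_list (take i \<beta>) < sum_list (take (Suc j) \<alpha>) \<and>
      sum_list (take (Suc j) \<alpha>) \<le> sum_list (take (Suc i) \<beta>)}"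

definition E_cnt :: "nat list \<Rightarrow> nat list \<Rightarrow> nat \<Rightarrow> nat" where
  "E_cnt \<alpha> \<beta> i = card {j. j < length \<alpha> \<and> even (\<alpha> ! j) \<and>
      sum_list (take i \<beta>) < sum_list (take (Suc j) \<alpha>) \<and>
      sum_list (take (Suc j) \<alpha>) \<le> sum_list (take (Suc i) \<beta>)}"

definition coef :: "nat list \<Rightarrow> nat list \<Rightarrow> rat" where
  "coef \<alpha> \<beta> = (\<Prod>i<length \<beta>. 1 / (fact (O_cnt \<alpha> \<beta> i) * fact (E_cnt \<alpha> \<beta> i)))"

text \<open>Shuffle function S_alpha = sum over m_o(alpha) \<le> beta \<le> alpha of c_alpha^beta M_beta,
  beta ranging over compositions of |alpha|.\<close>
definition S :: "nat list \<Rightarrow> qsym" where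
  "S \<alpha> = (\<Sum>\<beta>\<in>{\<beta>. is_comp \<beta> \<and> sum_list \<beta> = sum_list \<alpha> \<and>
                      Iset (m_o \<alpha>) \<subseteq> Iset \<beta> \<and> Iset \<beta> \<subseteq> Iset \<alpha>}.
            (\<lambda>\<delta>. coef \<alpha> \<beta> * M \<beta> \<delta>))"

end

theory Submission
  imports Defs
begin

(* Write \<delta> = \<beta>\<gamma>. The coefficient of M_\<delta> in S_\<alpha> vanishes unless |\<delta>| = |\<alpha>| and
   I(m_o \<alpha>) \<subseteq> I(\<delta>) \<subseteq> I(\<alpha>); then |\<beta>| is a partial sum of \<alpha>, i.e. \<alpha> = \<alpha>1\<alpha>2 with
   |\<alpha>1| = |\<beta>|, and as all parts are positive this split of \<alpha> is unique. So it suffices that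
   the coefficient is multiplicative across such a cut. I(\<alpha>1\<alpha>2) consists of I(\<alpha>1), the
   shift of I(\<alpha>2) by |\<alpha>1|, and the cut point |\<alpha>1|; the same holds for I(m_o(\<alpha>1\<alpha>2)), except
   that the cut point occurs only if \<alpha>1 ends odd and \<alpha>2 starts even. Hence the interval
   condition for (\<alpha>, \<delta>) is the conjunction of those for (\<alpha>1, \<beta>) and (\<alpha>2, \<gamma>). Finally every
   block of \<delta> lies within \<beta> or within \<gamma>, so c_\<alpha>^\<delta> = c_\<alpha>1^\<beta> c_\<alpha>2^\<gamma>. *)

lemma sum_apply: "(\<Sum>x\<in>A. f x) y = (\<Sum>x\<in>A. f x y)"
  by (induction A rule: infinite_finite_induct) auto

lemma is_comp_Nil [simp]: "is_comp []"
  by (simp add: is_comp_def)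

lemma is_comp_Cons [simp]: "is_comp (x # xs) \<longleftrightarrow> 0 < x \<and> is_comp xs"
  by (simp add: is_comp_def)

lemma is_comp_append [simp]: "is_comp (xs @ ys) \<longleftrightarrow> is_comp xs \<and> is_comp ys"
  by (auto simp: is_comp_def)

lemma is_comp_eq_Nil_iff: "is_comp xs \<Longrightarrow> xs = [] \<longleftrightarrow> sum_list xs = 0"
  by (cases xs) auto

lemma sum_list_take_pos: "is_comp xs \<Longrightarrow> 0 < k \<Longrightarrow> xs \<noteq> [] \<Longrightarrow> 0 < sum_list (take k xs)"
  by (cases xs; cases k) auto

lemma sum_list_take_le: "sum_list (take k xs) \<le> sum_list (xs :: nat list)"
  by (metis append_take_drop_id le_add1 sum_list_append)

lemma finite_compositions: "finite {\<beta>. is_comp \<beta> \<and> sum_list \<beta> = n \<and> P \<beta>}"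
proof -
  have "length \<beta> \<le> sum_list \<beta>" if "is_comp \<beta>" for \<beta>
    using that by (induction \<beta>) auto
  then have "{\<beta>. is_comp \<beta> \<and> sum_list \<beta> = n \<and> P \<beta>} \<subseteq> {xs. set xs \<subseteq> {..n} \<and> length xs \<le> n}"
    using member_le_sum_list by fastforce
  then show ?thesis
    using finite_lists_length_le[of "{..n}" n] finite_subset by blast
qed

lemma comp_prefix_eq_if_sum_list_eq:
  assumes "is_comp \<alpha>" "\<beta>1 @ \<gamma>1 = \<alpha>" "\<beta>2 @ \<gamma>2 = \<alpha>" "sum_list \<beta>1 = sum_list \<beta>2"
  shows "\<beta>1 = \<beta>2"
proof -
  obtain us where "\<beta>1 = \<beta>2 @ us \<and> us @ \<gamma>1 = \<gamma>2 \<or> \<beta>1 @ us = \<beta>2 \<and> \<gamma>1 = us @ \<gamma>2"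
    using append_eq_append_conv2[of \<beta>1 \<gamma>1 \<beta>2 \<gamma>2] assms(2,3) by auto
  moreover have "is_comp \<beta>1" "is_comp \<beta>2" "is_comp \<gamma>1" "is_comp \<gamma>2"
    using assms(1-3) is_comp_append by metis+
  ultimately have "is_comp us" "sum_list us = 0"
    using assms(4) by auto
  then show ?thesis
    using \<open>\<beta>1 = \<beta>2 @ us \<and> _ \<or> _\<close> is_comp_eq_Nil_iff by auto
qed

lemma finite_splits: "finite {(\<beta>, \<gamma>). \<beta> @ \<gamma> = \<alpha>}"
proof -
  have "(\<beta>, \<gamma>) \<in> (\<lambda>k. (take k \<alpha>, drop k \<alpha>)) ` {..length \<alpha>}" if "\<beta> @ \<gamma> = \<alpha>" for \<beta> \<gamma>
    using that by (auto intro!: image_eqI[where x = "length \<beta>"])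
  then have "{(\<beta>, \<gamma>). \<beta> @ \<gamma> = \<alpha>} \<subseteq> (\<lambda>k. (take k \<alpha>, drop k \<alpha>)) ` {..length \<alpha>}"
    by auto
  then show ?thesis
    using finite_subset by blast
qed

lemma Iset_eq_image: "Iset \<alpha> = (\<lambda>k. sum_list (take k \<alpha>)) ` {0<..<length \<alpha>}"
  by (auto simp: Iset_def)

lemma Iset_Nil [simp]: "Iset [] = {}"
  by (simp add: Iset_def)

lemma Iset_Cons: "Iset (a # xs) = (if xs = [] then {} else insert a ((+) a ` Iset xs))"
proof -
  have "{0<..<Suc (length xs)} = Suc ` {..<length xs}"
    by (auto simp: image_iff gr0_conv_Suc)
  moreover have "{..<length xs} = insert 0 {0<..<length xs}" if "xs \<noteq> []"
    using that by auto
  ultimately show ?thesis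
    by (auto simp: Iset_eq_image image_image)
qed

lemma Iset_append:
  "Iset (xs @ ys) = Iset xs \<union> (+) (sum_list xs) ` Iset ys \<union>
     (if xs \<noteq> [] \<and> ys \<noteq> [] then {sum_list xs} else {})"
  by (induction xs) (auto simp: Iset_Cons image_image add.assoc image_Un)

lemma Iset_bounds: "is_comp xs \<Longrightarrow> Iset xs \<subseteq> {0<..<sum_list xs}"
  by (induction xs) (auto simp: Iset_Cons is_comp_eq_Nil_iff dest: member_le_sum_list)

fun odd_even_cuts :: "nat list \<Rightarrow> nat set" where
  "odd_even_cuts [] = {}"
| "odd_even_cuts [a] = {}"
| "odd_even_cuts (a # b # xs) =
     (if odd a \<and> even b then {a} else {}) \<union> (+) a ` odd_even_cuts (b # xs)"

lemma odd_even_cuts_Cons: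
  "odd_even_cuts (a # xs) =
     (if xs \<noteq> [] \<and> odd a \<and> even (hd xs) then {a} else {}) \<union> (+) a ` odd_even_cuts xs"
  by (cases xs) auto

lemma odd_even_cuts_append:
  "odd_even_cuts (xs @ ys) = odd_even_cuts xs \<union> (+) (sum_list xs) ` odd_even_cuts ys \<union>
     (if xs \<noteq> [] \<and> ys \<noteq> [] \<and> odd (last xs) \<and> even (hd ys) then {sum_list xs} else {})"
  by (induction xs) (auto simp: odd_even_cuts_Cons image_image add.assoc image_Un)

lemma odd_even_cuts_subset_Iset: "odd_even_cuts xs \<subseteq> Iset xs"
proof (induction xs rule: odd_even_cuts.induct)
  case (3 a b xs)
  have "Iset (a # b # xs) = insert a ((+) a ` Iset (b # xs))"
    by (simp add: Iset_Cons del: Iset_Cons[of b])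
  with 3 show ?case
    by auto
qed auto

lemma m_o_eq_Nil_iff [simp]: "m_o xs = [] \<longleftrightarrow> xs = []"
  by (induction xs rule: m_o.induct) (auto split: list.splits)

lemma Iset_m_o: "Iset (m_o xs) = odd_even_cuts xs"
proof (induction xs rule: m_o.induct)
  case (3 a b xs)
  show ?case
  proof (cases "odd a \<and> even b")
    case True
    then show ?thesis
      using 3 by (simp add: Iset_Cons)
  next
    case False
    obtain h t where ht: "m_o (b # xs) = h # t"
      by (cases "m_o (b # xs)") auto
    with False have "m_o (a # b # xs) = (a + h) # t"
      by simp
    then have "Iset (m_o (a # b # xs)) = (+) a ` Iset (h # t)"
      by (auto simp: Iset_Cons image_image add.assoc)
    also have "Iset (h # t) = odd_even_cuts (b # xs)"
      using 3(2) False ht by simp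
    also have "(+) a ` odd_even_cuts (b # xs) = odd_even_cuts (a # b # xs)"
      using False by (simp only: odd_even_cuts.simps if_False Un_empty_left)
    finally show ?thesis .
  qed
qed (auto simp: Iset_Cons)

definition in_shuffle_interval :: "nat list \<Rightarrow> nat list \<Rightarrow> bool" where
  "in_shuffle_interval \<alpha> \<beta> \<longleftrightarrow>
     is_comp \<beta> \<and> sum_list \<beta> = sum_list \<alpha> \<and> Iset (m_o \<alpha>) \<subseteq> Iset \<beta> \<and> Iset \<beta> \<subseteq> Iset \<alpha>"

lemma S_apply: "S \<alpha> \<beta> = (if in_shuffle_interval \<alpha> \<beta> then coef \<alpha> \<beta> else 0)"
  using finite_compositions
  by (simp add: S_def sum_apply M_def in_shuffle_interval_def if_distrib[of "\<lambda>x. _ * x"] cong: if_cong)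

lemma shifted_union_subset_iff:
  fixes n :: nat
  assumes "X1 \<union> Y1 \<subseteq> {..<n}" "0 \<notin> X2 \<union> Y2" "E \<subseteq> {n}" "F \<subseteq> {n}"
  shows "X1 \<union> (+) n ` X2 \<union> E \<subseteq> Y1 \<union> (+) n ` Y2 \<union> F \<longleftrightarrow> X1 \<subseteq> Y1 \<and> X2 \<subseteq> Y2 \<and> E \<subseteq> F"
proof -
  have "x \<notin> (+) n ` Y2 \<union> F" if "x \<in> X1" for x
    using that assms(1,4) by auto
  moreover have "n + x \<notin> Y1 \<union> F" if "x \<in> X2" for x
    using that assms by auto
  moreover have "n \<notin> Y1 \<union> (+) n ` Y2"
    using assms(1,2) by auto
  ultimately show ?thesis
    using assms(3) by (auto simp: subset_iff)
qed

lemma in_shuffle_interval_append_iff: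
  assumes "is_comp \<alpha>1" "is_comp \<alpha>2" "sum_list \<beta>1 = sum_list \<alpha>1"
  shows "in_shuffle_interval (\<alpha>1 @ \<alpha>2) (\<beta>1 @ \<beta>2) \<longleftrightarrow>
    in_shuffle_interval \<alpha>1 \<beta>1 \<and> in_shuffle_interval \<alpha>2 \<beta>2"
proof (cases "is_comp \<beta>1 \<and> is_comp \<beta>2 \<and> sum_list \<beta>2 = sum_list \<alpha>2")
  case True
  let ?n = "sum_list \<alpha>1"
  have "Iset \<alpha>1 \<union> Iset \<beta>1 \<subseteq> {..<?n}" "0 \<notin> Iset \<alpha>2 \<union> Iset \<beta>2"
    using Iset_bounds[of \<alpha>1] Iset_bounds[of \<alpha>2] Iset_bounds[of \<beta>1] Iset_bounds[of \<beta>2]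
      True assms by auto
  then have bounds: "Iset \<alpha>1 \<union> Iset \<beta>1 \<union> odd_even_cuts \<alpha>1 \<subseteq> {..<?n}"
    "0 \<notin> Iset \<alpha>2 \<union> Iset \<beta>2 \<union> odd_even_cuts \<alpha>2"
    using odd_even_cuts_subset_Iset[of \<alpha>1] odd_even_cuts_subset_Iset[of \<alpha>2] by auto
  have nonempty_iff: "\<alpha>1 \<noteq> [] \<and> \<alpha>2 \<noteq> [] \<longleftrightarrow> \<beta>1 \<noteq> [] \<and> \<beta>2 \<noteq> []"
    using is_comp_eq_Nil_iff True assms by metis
  have "odd_even_cuts (\<alpha>1 @ \<alpha>2) \<subseteq> Iset (\<beta>1 @ \<beta>2) \<longleftrightarrow>
      odd_even_cuts \<alpha>1 \<subseteq> Iset \<beta>1 \<and> odd_even_cuts \<alpha>2 \<subseteq> Iset \<beta>2"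
    unfolding odd_even_cuts_append Iset_append assms(3)
    by (subst shifted_union_subset_iff; use bounds nonempty_iff in auto)
  moreover have "Iset (\<beta>1 @ \<beta>2) \<subseteq> Iset (\<alpha>1 @ \<alpha>2) \<longleftrightarrow>
      Iset \<beta>1 \<subseteq> Iset \<alpha>1 \<and> Iset \<beta>2 \<subseteq> Iset \<alpha>2"
    unfolding Iset_append assms(3)
    by (subst shifted_union_subset_iff; use bounds nonempty_iff in auto)
  ultimately show ?thesis
    using True assms by (auto simp: in_shuffle_interval_def Iset_m_o)
next
  case False
  then show ?thesis
    using assms by (auto simp: in_shuffle_interval_def)
qed

definition parts_ending_in :: "(nat \<Rightarrow> bool) \<Rightarrow> nat list \<Rightarrow> nat \<Rightarrow> nat \<Rightarrow> nat" where
  "parts_ending_in P \<alpha> lo hi = card {j. j < length \<alpha> \<and> P (\<alpha> ! j) \<and>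
     lo < sum_list (take (Suc j) \<alpha>) \<and> sum_list (take (Suc j) \<alpha>) \<le> hi}"

lemma Collect_less_length_append:
  "{j. j < length (xs @ ys) \<and> Q j} =
     {j. j < length xs \<and> Q j} \<union> (+) (length xs) ` {j. j < length ys \<and> Q (length xs + j)}"
  by (auto simp: image_iff) (metis add_diff_inverse_nat add_less_imp_less_left)

lemma parts_ending_in_append_left:
  assumes "is_comp \<alpha>2" "hi \<le> sum_list \<alpha>1"
  shows "parts_ending_in P (\<alpha>1 @ \<alpha>2) lo hi = parts_ending_in P \<alpha>1 lo hi"
proof -
  have "\<not> sum_list \<alpha>1 + sum_list (take (Suc j) \<alpha>2) \<le> hi" if "j < length \<alpha>2" for j
    using that assms sum_list_take_pos[of \<alpha>2 "Suc j"] by (cases \<alpha>2) auto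
  then show ?thesis
    unfolding parts_ending_in_def Collect_less_length_append
    by (auto simp: nth_append intro!: arg_cong[where f = card])
qed

lemma parts_ending_in_append_right:
  "parts_ending_in P (\<alpha>1 @ \<alpha>2) (sum_list \<alpha>1 + lo) (sum_list \<alpha>1 + hi) = parts_ending_in P \<alpha>2 lo hi"
proof -
  have "sum_list (take (Suc j) \<alpha>1) \<le> sum_list \<alpha>1 + lo" for j
    using sum_list_take_le[of "Suc j" \<alpha>1] by simp
  then show ?thesis
    unfolding parts_ending_in_def Collect_less_length_append
    by (auto simp: nth_append card_image not_less[symmetric])
qed

lemma O_cnt_eq_parts_ending_in:
  "O_cnt \<alpha> \<beta> i = parts_ending_in odd \<alpha> (sum_list (take i \<beta>)) (sum_list (take (Suc i) \<beta>))"
  by (simp add: O_cnt_def parts_ending_in_def)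

lemma E_cnt_eq_parts_ending_in:
  "E_cnt \<alpha> \<beta> i = parts_ending_in even \<alpha> (sum_list (take i \<beta>)) (sum_list (take (Suc i) \<beta>))"
  by (simp add: E_cnt_def parts_ending_in_def)

lemma prod_lessThan_add:
  "(\<Prod>i<m + n. f i) = (\<Prod>i<m. f i) * (\<Prod>i<n. f (m + i))" for f :: "nat \<Rightarrow> 'a::comm_monoid_mult"
  by (induction n) (auto simp: mult.assoc)

lemma coef_append:
  assumes "is_comp \<alpha>2" "sum_list \<beta>1 = sum_list \<alpha>1"
  shows "coef (\<alpha>1 @ \<alpha>2) (\<beta>1 @ \<beta>2) = coef \<alpha>1 \<beta>1 * coef \<alpha>2 \<beta>2"
proof -
  have left: "parts_ending_in P (\<alpha>1 @ \<alpha>2) lo (sum_list (take k \<beta>1)) =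
      parts_ending_in P \<alpha>1 lo (sum_list (take k \<beta>1))" for P lo k
    using assms sum_list_take_le[of k \<beta>1] by (simp add: parts_ending_in_append_left)
  have right: "parts_ending_in P (\<alpha>1 @ \<alpha>2) (sum_list \<beta>1 + lo) (sum_list \<beta>1 + hi) =
      parts_ending_in P \<alpha>2 lo hi" for P lo hi
    using parts_ending_in_append_right[of P \<alpha>1 \<alpha>2] assms(2) by simp
  show ?thesis
    unfolding coef_def O_cnt_eq_parts_ending_in E_cnt_eq_parts_ending_in length_append
      prod_lessThan_add
    by (simp add: left right cong: prod.cong_simp)
qed

lemma S_append:
  assumes "is_comp \<alpha>1" "is_comp \<alpha>2" "sum_list \<beta>1 = sum_list \<alpha>1"
  shows "S (\<alpha>1 @ \<alpha>2) (\<beta>1 @ \<beta>2) = S \<alpha>1 \<beta>1 * S \<alpha>2 \<beta>2"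
  using in_shuffle_interval_append_iff[OF assms] coef_append[OF assms(2,3)] by (simp add: S_apply)

lemma S_eq_0_if_sum_list_neq: "sum_list \<beta> \<noteq> sum_list \<alpha> \<Longrightarrow> S \<alpha> \<beta> = 0"
  by (simp add: S_apply in_shuffle_interval_def)

lemma in_shuffle_interval_append_splitE:
  assumes "in_shuffle_interval \<alpha> (\<beta>1 @ \<beta>2)"
  obtains \<alpha>1 \<alpha>2 where "\<alpha>1 @ \<alpha>2 = \<alpha>" "sum_list \<alpha>1 = sum_list \<beta>1"
proof (cases "\<beta>1 = [] \<or> \<beta>2 = []")
  case True
  then show ?thesis
    using assms that[of "[]" \<alpha>] that[of \<alpha> "[]"] by (auto simp: in_shuffle_interval_def)
next
  case False
  then have "sum_list \<beta>1 \<in> Iset \<alpha>"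
    using assms by (auto simp: in_shuffle_interval_def Iset_append)
  then obtain k where "sum_list (take k \<alpha>) = sum_list \<beta>1"
    by (auto simp: Iset_def)
  then show ?thesis
    using that[of "take k \<alpha>" "drop k \<alpha>"] by simp
qed

lemma S_append_eq_sum_splits:
  assumes "is_comp \<alpha>"
  shows "S \<alpha> (\<beta> @ \<gamma>) = (\<Sum>(\<alpha>1, \<alpha>2)\<in>{(\<alpha>1, \<alpha>2). \<alpha>1 @ \<alpha>2 = \<alpha>}. S \<alpha>1 \<beta> * S \<alpha>2 \<gamma>)"
proof (cases "\<exists>\<alpha>1 \<alpha>2. \<alpha>1 @ \<alpha>2 = \<alpha> \<and> sum_list \<alpha>1 = sum_list \<beta>")
  case True
  then obtain \<alpha>1 \<alpha>2 where split: "\<alpha>1 @ \<alpha>2 = \<alpha>" "sum_list \<alpha>1 = sum_list \<beta>"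
    by blast
  have other_splits_vanish: "S \<delta>1 \<beta> * S \<delta>2 \<gamma> = 0"
    if "\<delta>1 @ \<delta>2 = \<alpha>" "(\<delta>1, \<delta>2) \<noteq> (\<alpha>1, \<alpha>2)" for \<delta>1 \<delta>2
  proof -
    have "\<delta>1 \<noteq> \<alpha>1"
      using that split(1) by auto
    then have "sum_list \<delta>1 \<noteq> sum_list \<beta>"
      using comp_prefix_eq_if_sum_list_eq[OF assms that(1) split(1)] split(2) by auto
    then show ?thesis
      by (simp add: S_eq_0_if_sum_list_neq)
  qed
  have "(\<Sum>(\<delta>1, \<delta>2)\<in>{(\<delta>1, \<delta>2). \<delta>1 @ \<delta>2 = \<alpha>}. S \<delta>1 \<beta> * S \<delta>2 \<gamma>) =
      (\<Sum>(\<delta>1, \<delta>2)\<in>{(\<alpha>1, \<alpha>2)}. S \<delta>1 \<beta> * S \<delta>2 \<gamma>)"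
    using split(1) by (intro sum.mono_neutral_right finite_splits) (auto intro!: other_splits_vanish)
  also have "\<dots> = S \<alpha>1 \<beta> * S \<alpha>2 \<gamma>"
    by simp
  also have "\<dots> = S \<alpha> (\<beta> @ \<gamma>)"
    using S_append[of \<alpha>1 \<alpha>2 \<beta> \<gamma>] assms split by auto
  finally show ?thesis ..
next
  case False
  then have "\<not> in_shuffle_interval \<alpha> (\<beta> @ \<gamma>)"
    by (metis in_shuffle_interval_append_splitE)
  moreover have "S \<delta>1 \<beta> = 0" if "\<delta>1 @ \<delta>2 = \<alpha>" for \<delta>1 \<delta>2
    using False that by (metis S_eq_0_if_sum_list_neq)
  ultimately show ?thesis
    by (auto simp: S_apply intro!: sum.neutral)
qed

theorem mainTheorem3:
  fixes \<alpha> :: "nat list"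
  assumes "is_comp \<alpha>"
  shows "Delta (S \<alpha>) = (\<Sum>(\<beta>, \<gamma>)\<in>{(\<beta>, \<gamma>). \<beta> @ \<gamma> = \<alpha>}. tensor (S \<beta>) (S \<gamma>))"
proof
  fix p :: "nat list \<times> nat list"
  show "Delta (S \<alpha>) p = (\<Sum>(\<beta>, \<gamma>)\<in>{(\<beta>, \<gamma>). \<beta> @ \<gamma> = \<alpha>}. tensor (S \<beta>) (S \<gamma>)) p"
    by (cases p) (simp add: Delta_def sum_apply tensor_def split_def S_append_eq_sum_splits[OF assms])
qed

end
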